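(* Let $(\mathcal V,\mathcal W,\lambda)$ be a FTvN system. Then: (a) A linear map $A:\mathcal V\to\mathcal V$ belongs to $\operatorname{Aut}(\mathcal V,\mathcal W,\lambda)$ if and only if $A$ is invertible and both $A$ and $A^{-1}$ are doubly stochastic. (b) If $\mathcal V$ is finite dimensional, every $D$ in the convex hull of $\operatorname{Aut}(\mathcal V,\mathcal W,\lambda)$ is doubly stochastic.
   Context: A Fan-Theobald-von Neumann (FTvN) system is a triple $(\mathcal V,\mathcal W,\lambda)$ where $\mathcal V,\mathcal W$ are real inner product spaces and $\lambda:\mathcal V\to\mathcal W$ is a map such that: (A1) $\|\lambda(x)\|=\|x\|$ for all $x$; (A2) $\langle x,y\rangle\le\langle\lambda(x),\lambda(y)\rangle$ for all $x,y$; (A3) for every $c\in\mathcal V$ and $q\in\lambda(\mathcal V)$ there exists $x$ with $\lambda(x)=q$ and $\langle c,x\rangle=\langle\lambda(c),\lambda(x)\rangle$. $[u]=\{z:\lambda(z)=\lambda(u)\}$; $x\prec y$ iff $x\in\operatorname{conv}[y]$. A linear map $D$ is doubly stochastic if $Dx\prec x$ for all $x$. $\operatorname{Aut}(\mathcal V,\mathcal W,\lambda)$ is the set of invertible linear maps $A:\mathcal V\to\mathcal V$ with $\lambda(Ax)=\lambda(x)$ for all $x$. *)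

theory Defs
  imports "HOL-Analysis.Analysis"
begin

text \<open>Fan-Theobald-von Neumann system: lam maps the real inner product space 'a
  (the space V) to the real inner product space 'b (the space W).\<close>
definition FTvN_system :: "('a::real_inner \<Rightarrow> 'b::real_inner) \<Rightarrow> bool" where
  "FTvN_system lam \<longleftrightarrow>
     (\<forall>x. norm (lam x) = norm x) \<and>
     (\<forall>x y. inner x y \<le> inner (lam x) (lam y)) \<and>
     (\<forall>c q. q \<in> range lam \<longrightarrow> (\<exists>x. lam x = q \<and> inner c x = inner (lam c) (lam x)))"

definition lam_class :: "('a \<Rightarrow> 'b) \<Rightarrow> 'a \<Rightarrow> 'a set" where
  "lam_class lam u = {z. lam z = lam u}"

definition majorized :: "('a::real_vector \<Rightarrow> 'b) \<Rightarrow> 'a \<Rightarrow> 'a \<Rightarrow> bool" where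
  "majorized lam x y \<longleftrightarrow> x \<in> convex hull (lam_class lam y)"

definition doubly_stochastic :: "('a::real_vector \<Rightarrow> 'b) \<Rightarrow> ('a \<Rightarrow> 'a) \<Rightarrow> bool" where
  "doubly_stochastic lam D \<longleftrightarrow> linear D \<and> (\<forall>x. majorized lam (D x) x)"

definition Aut :: "('a::real_vector \<Rightarrow> 'b) \<Rightarrow> ('a \<Rightarrow> 'a) set" where
  "Aut lam = {A. linear A \<and> bij A \<and> (\<forall>x. lam (A x) = lam x)}"

definition map_convex_hull :: "('a \<Rightarrow> 'a::real_vector) set \<Rightarrow> ('a \<Rightarrow> 'a) set" where
  "map_convex_hull S = {D. \<exists>(n::nat) (c::nat \<Rightarrow> real) F.
       (\<forall>i<n. 0 \<le> c i \<and> F i \<in> S) \<and> (\<Sum>i<n. c i) = 1 \<and>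
       D = (\<lambda>x. \<Sum>i<n. c i *\<^sub>R F i x)}"

definition finite_dimensional_space :: "'a::real_vector itself \<Rightarrow> bool" where
  "finite_dimensional_space _ \<longleftrightarrow> (\<exists>B::'a set. finite B \<and> span B = UNIV)"

end

theory Submission
  imports Defs
begin

text \<open>Only the norm-preservation axiom (A1) of an FTvN system is needed. Under it every
  class \<open>[y]\<close> lies on the sphere of radius \<open>\<parallel>y\<parallel>\<close>, so \<open>x \<prec> y\<close> forces \<open>\<parallel>x\<parallel> \<le> \<parallel>y\<parallel>\<close>, and
  since the sphere of an inner product space consists of extreme points of the ball, equality
  \<open>\<parallel>x\<parallel> = \<parallel>y\<parallel>\<close> forces \<open>x \<in> [y]\<close>. If \<open>A\<close> and \<open>A\<^sup>-\<^sup>1\<close> are doubly stochastic, then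
  \<open>\<parallel>x\<parallel> = \<parallel>A\<^sup>-\<^sup>1(A x)\<parallel> \<le> \<parallel>A x\<parallel> \<le> \<parallel>x\<parallel>\<close>, hence \<open>A x \<in> [x]\<close>. Part (b) holds because each
  \<open>convex hull [x]\<close> is convex.\<close>

lemma norm_convex_combination_squared:
  fixes a b :: "'a::real_inner"
  shows "(norm ((1 - u) *\<^sub>R a + u *\<^sub>R b))\<^sup>2
         = (1 - u) * (norm a)\<^sup>2 + u * (norm b)\<^sup>2 - u * (1 - u) * (norm (a - b))\<^sup>2"
  by (simp add: power2_norm_eq_inner inner_add_left inner_add_right inner_diff_left
      inner_diff_right inner_commute algebra_simps)

lemma extreme_point_of_cball:
  fixes x :: "'a::real_inner"
  assumes "norm x = r"
  shows "x extreme_point_of cball 0 r"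
  unfolding extreme_point_of_def
proof (intro conjI ballI notI)
  show "x \<in> cball 0 r" using assms by simp
next
  fix a b assume a: "a \<in> cball 0 r" and b: "b \<in> cball 0 r" and x: "x \<in> open_segment a b"
  then obtain u where "a \<noteq> b" "0 < u" "u < 1" and x_eq: "x = (1 - u) *\<^sub>R a + u *\<^sub>R b"
    by (auto simp: in_segment)
  then have gap: "0 < u * (1 - u) * (norm (a - b))\<^sup>2" by simp
  have "(norm a)\<^sup>2 \<le> r\<^sup>2" "(norm b)\<^sup>2 \<le> r\<^sup>2"
    using a b by (auto intro!: power_mono)
  then have "(1 - u) * (norm a)\<^sup>2 + u * (norm b)\<^sup>2 \<le> (1 - u) * r\<^sup>2 + u * r\<^sup>2"
    using \<open>0 < u\<close> \<open>u < 1\<close> by (intro add_mono mult_left_mono) auto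
  then have "(norm x)\<^sup>2 < r\<^sup>2"
    using gap unfolding x_eq norm_convex_combination_squared by (simp add: algebra_simps)
  then show False using assms by simp
qed

lemma convex_hull_subset_cball:
  fixes S :: "'a::real_normed_vector set"
  assumes "S \<subseteq> sphere 0 r"
  shows "convex hull S \<subseteq> cball 0 r"
  using assms by (meson convex_cball hull_minimal order_trans sphere_cball)

lemma mem_of_convex_hull_sphere:
  fixes S :: "'a::real_inner set"
  assumes "S \<subseteq> sphere 0 r" and "x \<in> convex hull S" and "norm x = r"
  shows "x \<in> S"
proof -
  have "x extreme_point_of convex hull S"
    using extreme_point_of_cball[OF assms(3)] convex_hull_subset_cball[OF assms(1)] assms(2)
    by (auto simp: extreme_point_of_def)
  then show ?thesis by (rule extreme_point_of_convex_hull)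
qed

lemma linear_inv:
  fixes A :: "'a::real_vector \<Rightarrow> 'b::real_vector"
  assumes "linear A" and "bij A"
  shows "linear (inv A)"
  using assms bij_module_hom_imp_inv_module_hom[of scaleR scaleR A]
  by (simp add: linear_def module_hom_iff_linear)

lemma FTvN_system_norm_eq: "FTvN_system lam \<Longrightarrow> norm (lam x) = norm x"
  unfolding FTvN_system_def by blast

lemma lam_class_subset_sphere:
  assumes "\<And>x. norm (lam x) = norm x"
  shows "lam_class lam y \<subseteq> sphere 0 (norm y)"
proof
  fix z assume "z \<in> lam_class lam y"
  then have "lam z = lam y" by (simp add: lam_class_def)
  then show "z \<in> sphere 0 (norm y)" by (metis assms mem_sphere_0)
qed

lemma majorized_refl_lam: "lam x = lam y \<Longrightarrow> majorized lam x y"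
  unfolding majorized_def lam_class_def by (simp add: hull_inc)

lemma majorized_norm_le:
  fixes x y :: "'a::real_normed_vector"
  assumes "\<And>x. norm (lam x) = norm x" and "majorized lam x y"
  shows "norm x \<le> norm y"
  using convex_hull_subset_cball[OF lam_class_subset_sphere[OF assms(1), of y]] assms(2)
  unfolding majorized_def by auto

lemma majorized_norm_eq_imp_lam_eq:
  fixes x y :: "'a::real_inner"
  assumes "\<And>x. norm (lam x) = norm x" and "majorized lam x y" and "norm x = norm y"
  shows "lam x = lam y"
  using mem_of_convex_hull_sphere[OF lam_class_subset_sphere[OF assms(1)]] assms(2,3)
  unfolding majorized_def lam_class_def by blast

lemma doubly_stochastic_if_Aut: "A \<in> Aut lam \<Longrightarrow> doubly_stochastic lam A"
  unfolding Aut_def doubly_stochastic_def by (simp add: majorized_refl_lam)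

lemma inv_Aut:
  assumes "A \<in> Aut lam"
  shows "inv A \<in> Aut lam"
proof -
  from assms have "linear A" "bij A" and lam_A: "\<And>x. lam (A x) = lam x"
    by (auto simp: Aut_def)
  have "lam (inv A x) = lam x" for x
    using lam_A[of "inv A x"] by (simp add: bij_is_surj[OF \<open>bij A\<close>] surj_f_inv_f)
  then show ?thesis
    using \<open>linear A\<close> \<open>bij A\<close> by (simp add: Aut_def linear_inv bij_imp_bij_inv)
qed

lemma Aut_if_doubly_stochastic:
  fixes A :: "'a::real_inner \<Rightarrow> 'a"
  assumes lam_norm: "\<And>x. norm (lam x) = norm x" and "bij A"
    and A: "doubly_stochastic lam A" and inv_A: "doubly_stochastic lam (inv A)"
  shows "A \<in> Aut lam"
proof -
  have "lam (A x) = lam x" for x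
  proof (rule majorized_norm_eq_imp_lam_eq[OF lam_norm])
    show Ax: "majorized lam (A x) x" using A unfolding doubly_stochastic_def by blast
    have "majorized lam (inv A (A x)) (A x)" using inv_A unfolding doubly_stochastic_def by blast
    then have "norm x \<le> norm (A x)"
      using majorized_norm_le[OF lam_norm] bij_is_inj[OF \<open>bij A\<close>] by fastforce
    then show "norm (A x) = norm x"
      using majorized_norm_le[OF lam_norm Ax] by simp
  qed
  then show ?thesis
    using A \<open>bij A\<close> unfolding Aut_def doubly_stochastic_def by blast
qed

lemma doubly_stochastic_map_convex_hull:
  assumes "S \<subseteq> {D. doubly_stochastic lam D}" and "D \<in> map_convex_hull S"
  shows "doubly_stochastic lam D"
proof -
  obtain n :: nat and c :: "nat \<Rightarrow> real" and F :: "nat \<Rightarrow> 'a \<Rightarrow> 'a"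
    where cF: "\<forall>i<n. 0 \<le> c i \<and> F i \<in> S" and sum_c: "(\<Sum>i<n. c i) = 1"
    and D: "D = (\<lambda>x. \<Sum>i<n. c i *\<^sub>R F i x)"
    using assms(2) unfolding map_convex_hull_def by blast
  have F_linear: "linear (F i)" and F_majorized: "majorized lam (F i x) x" if "i < n" for i x
    using assms(1) cF that unfolding doubly_stochastic_def by blast+
  have "linear D"
    unfolding D by (intro linear_compose_sum) (simp add: F_linear linear_compose_scale_right)
  moreover have "majorized lam (D x) x" for x
    unfolding majorized_def D using F_majorized cF sum_c
    by (intro convex_sum convex_convex_hull) (auto simp: majorized_def)
  ultimately show ?thesis unfolding doubly_stochastic_def by blast
qed

theorem proposition9p4:
  fixes lam :: "'a::real_inner \<Rightarrow> 'b::real_inner"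
  assumes "FTvN_system lam"
  shows "(\<forall>A::'a \<Rightarrow> 'a. linear A \<longrightarrow>
            (A \<in> Aut lam \<longleftrightarrow>
               bij A \<and> doubly_stochastic lam A \<and> doubly_stochastic lam (inv A)))
         \<and> (finite_dimensional_space TYPE('a) \<longrightarrow>
            (\<forall>D \<in> map_convex_hull (Aut lam). doubly_stochastic lam D))"
proof -
  have "A \<in> Aut lam \<longleftrightarrow> bij A \<and> doubly_stochastic lam A \<and> doubly_stochastic lam (inv A)"
    for A :: "'a \<Rightarrow> 'a"
  proof
    assume A: "A \<in> Aut lam"
    then show "bij A \<and> doubly_stochastic lam A \<and> doubly_stochastic lam (inv A)"
      using doubly_stochastic_if_Aut[OF A] doubly_stochastic_if_Aut[OF inv_Aut[OF A]]
      by (simp add: Aut_def)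
  next
    assume "bij A \<and> doubly_stochastic lam A \<and> doubly_stochastic lam (inv A)"
    then show "A \<in> Aut lam"
      by (intro Aut_if_doubly_stochastic FTvN_system_norm_eq[OF assms]) auto
  qed
  moreover have "doubly_stochastic lam D" if "D \<in> map_convex_hull (Aut lam)" for D
    by (rule doubly_stochastic_map_convex_hull[OF _ that]) (auto intro: doubly_stochastic_if_Aut)
  ultimately show ?thesis by blast
qed

end
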